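(* Let $d\ge2$, $\lambda>0$, $u>0$ and $\mathbf N\sim\mathrm{NDFHL}^{(d)}(\lambda,u)$. Then the differential entropy satisfies $|h(\mathbf N)|<\infty$.
   Context: For an integer $d\ge2$, $\lambda>0$, $u>0$, $\mathrm{NDFHL}^{(d)}(\lambda,u)$ is the probability law on $\mathbb R^{d-1}$ with density $$f(\mathbf n)=\frac{\lambda}{2^{\frac d2-1}\pi^{\frac d2}}\left(\frac{u}{\rho(\mathbf n)}\right)^{\frac d2}e^{\lambda u}K_{\frac d2}\bigl(u\rho(\mathbf n)\bigr),\quad \rho(\mathbf n)=\sqrt{\|\mathbf n\|^2+\lambda^2},$$ $K_\nu$ the modified Bessel function of the second kind. *)

theory Defs
  imports "HOL-Analysis.Analysis"
begin

definition besselK :: "real \<Rightarrow> real \<Rightarrow> real" where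
  "besselK \<nu> x = (LBINT t:{0..}. exp (- x * cosh t) * cosh (\<nu> * t))"

text \<open>Density of NDFHL^(d)(lambda,u) on R^(d-1); here the space R^(d-1) is the
type real^'n, so d = CARD('n) + 1 (hence d >= 2 automatically).\<close>
definition ndfhl_density :: "nat \<Rightarrow> real \<Rightarrow> real \<Rightarrow> real ^ 'n \<Rightarrow> real" where
  "ndfhl_density d lam u n =
     (let rho = sqrt ((norm n)\<^sup>2 + lam\<^sup>2) in
      lam / (2 powr (real d / 2 - 1) * pi powr (real d / 2))
      * (u / rho) powr (real d / 2) * exp (lam * u) * besselK (real d / 2) (u * rho))"

text \<open>Differential entropy h(N) = - int f ln f of a density f w.r.t. Lebesgue measure.
It is finite (|h(N)| < infinity) iff f ln f is Lebesgue integrable.\<close>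
definition diff_entropy_finite :: "('a::euclidean_space \<Rightarrow> real) \<Rightarrow> bool" where
  "diff_entropy_finite f \<longleftrightarrow> integrable lborel (\<lambda>x. f x * ln (f x))"

end

theory Submission
  imports Defs
begin

text \<open>The density is a function of \<open>\<rho> = sqrt (\<parallel>n\<parallel>\<^sup>2 + \<lambda>\<^sup>2)\<close>, and \<open>\<parallel>n\<parallel> \<le> \<rho> \<le> \<parallel>n\<parallel> + \<lambda>\<close>.
  The integral representation of \<open>K\<^sub>\<nu>\<close> squeezes it between \<open>exp (- z cosh 1)\<close> and
  \<open>exp (w - z) K\<^sub>\<nu>(w)\<close> for \<open>z \<ge> w\<close>, so the density lies between two exponentials
  \<open>L exp (- Q \<parallel>n\<parallel>)\<close> and \<open>M exp (- u \<parallel>n\<parallel>)\<close>. Then \<open>\<bar>ln f\<bar>\<close> grows at most linearly,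
  so \<open>\<bar>f ln f\<bar> \<le> C exp (- u \<parallel>n\<parallel> / 2)\<close>, which is integrable on \<open>\<real>\<^sup>d\<^sup>-\<^sup>1\<close> because it is
  dominated by a product of one-dimensional Laplace densities.\<close>

lemma integrable_exp_neg_abs:
  fixes c :: real
  assumes "c > 0"
  shows "integrable lborel (\<lambda>s::real. exp (- c * \<bar>s\<bar>))"
proof -
  have "(\<lambda>s. exp (- c * s)) absolutely_integrable_on {0..}"
    using integrable_on_exp_minus_to_infinity[OF assms]
    by (rule nonnegative_absolutely_integrable_1) simp
  then have pos: "integrable lborel (\<lambda>s. indicator {0..} s * exp (- c * s))"
    by (simp add: absolutely_integrable_on_def set_integrable_def integrable_completion)
  then have neg: "integrable lborel (\<lambda>s. indicator {0..} (- s) * exp (- c * - s))"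
    using lborel_integrable_real_affine[OF pos, of "-1" 0] by simp
  show ?thesis
  proof (rule Bochner_Integration.integrable_bound[OF Bochner_Integration.integrable_add[OF pos neg]])
    show "AE s in lborel. norm (exp (- c * \<bar>s\<bar>))
            \<le> norm (indicator {0..} s * exp (- c * s) + indicator {0..} (- s) * exp (- c * - s))"
      by (intro AE_I2) (auto simp: indicator_def)
  qed measurable
qed

lemma integrable_lborel_prod_Basis:
  fixes h :: "real \<Rightarrow> real"
  assumes h: "integrable lborel h" and h_nonneg: "\<And>s. 0 \<le> h s"
  shows "integrable lborel (\<lambda>x::'a::euclidean_space. \<Prod>b\<in>Basis. h (x \<bullet> b))"
proof -
  have [measurable]: "h \<in> borel_measurable borel"
    using h by auto
  have finite: "(\<integral>\<^sup>+s. ennreal (h s) \<partial>lborel) < \<infinity>"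
    using h h_nonneg by (simp add: integrable_iff_bounded)
  have "(\<integral>\<^sup>+(x::'a). ennreal (\<Prod>b\<in>Basis. h (x \<bullet> b)) \<partial>lborel)
      = (\<integral>\<^sup>+x. (\<Prod>b\<in>(Basis::'a set). ennreal (h (x \<bullet> b))) \<partial>lborel)"
    by (simp add: prod_ennreal h_nonneg)
  also have "\<dots> = (\<Prod>b\<in>(Basis::'a set). \<integral>\<^sup>+s. ennreal (h s) \<partial>lborel)"
    by (rule nn_integral_lborel_prod) auto
  also have "\<dots> < \<infinity>"
    using finite by (simp add: power_less_top_ennreal)
  finally show ?thesis
    by (subst integrable_iff_bounded) (auto simp: h_nonneg prod_nonneg)
qed

lemma integrable_exp_neg_norm:
  fixes c :: real
  assumes "c > 0"
  shows "integrable lborel (\<lambda>x::'a::euclidean_space. exp (- c * norm x))"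
proof -
  define c' where "c' = c / DIM('a)"
  have "c' > 0"
    using assms by (simp add: c'_def)
  have bound: "exp (- c * norm x) \<le> (\<Prod>b\<in>Basis. exp (- c' * \<bar>x \<bullet> b\<bar>))" for x :: 'a
  proof -
    have "(\<Sum>b\<in>Basis. \<bar>x \<bullet> b\<bar>) \<le> DIM('a) * norm x"
      using sum_bounded_above[of Basis "\<lambda>b. \<bar>x \<bullet> b\<bar>" "norm x"] Basis_le_norm by auto
    then have "- c' * (\<Sum>b\<in>Basis. \<bar>x \<bullet> b\<bar>) \<ge> - c' * (DIM('a) * norm x)"
      using \<open>c' > 0\<close> by (intro mult_left_mono_neg) auto
    then have "- c * norm x \<le> (\<Sum>b\<in>Basis. - c' * \<bar>x \<bullet> b\<bar>)"
      by (simp add: c'_def sum_distrib_left)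
    then show ?thesis
      by (simp add: exp_sum[symmetric])
  qed
  show ?thesis
  proof (rule Bochner_Integration.integrable_bound)
    show "integrable lborel (\<lambda>x::'a. \<Prod>b\<in>Basis. exp (- c' * \<bar>x \<bullet> b\<bar>))"
      by (intro integrable_lborel_prod_Basis integrable_exp_neg_abs \<open>c' > 0\<close>) simp
    show "AE x in lborel. norm (exp (- c * norm (x::'a))) \<le> norm (\<Prod>b\<in>Basis. exp (- c' * \<bar>x \<bullet> b\<bar>))"
      using bound by (intro AE_I2) (simp add: prod_nonneg)
  qed measurable
qed

lemma cosh_ge_square_div_4:
  fixes t :: real
  assumes "t \<ge> 0"
  shows "t\<^sup>2 / 4 \<le> cosh t"
proof -
  have "1 + t + t\<^sup>2 / 2 \<le> exp t"
    using exp_lower_Taylor_quadratic[OF assms] by simp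
  moreover have "exp t / 2 \<le> cosh t"
    by (simp add: cosh_def)
  ultimately show ?thesis
    using assms by linarith
qed

lemma cosh_le_exp_abs:
  fixes x :: real
  shows "cosh x \<le> exp \<bar>x\<bar>"
  by (cases "x \<ge> 0") (simp_all add: cosh_def)

lemma besselK_integrand_le:
  fixes z \<nu> t :: real
  assumes z: "z > 0" and t: "t \<ge> 0"
  shows "exp (- z * cosh t) * cosh (\<nu> * t) \<le> exp ((\<bar>\<nu>\<bar> + 1)\<^sup>2 / z) * exp (- t)"
proof -
  have "exp (- z * cosh t) * cosh (\<nu> * t) \<le> exp (- z * (t\<^sup>2 / 4)) * exp (\<bar>\<nu>\<bar> * t)"
    using cosh_ge_square_div_4[OF t] cosh_le_exp_abs[of "\<nu> * t"] z t
    by (intro mult_mono) (auto simp: abs_mult)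
  also have "\<dots> = exp (- z * t\<^sup>2 / 4 + (\<bar>\<nu>\<bar> + 1) * t) * exp (- t)"
    by (simp add: exp_add[symmetric] algebra_simps)
  also have "\<dots> \<le> exp ((\<bar>\<nu>\<bar> + 1)\<^sup>2 / z) * exp (- t)"
  proof -
    have "z * (- z * t\<^sup>2 / 4 + (\<bar>\<nu>\<bar> + 1) * t) \<le> (\<bar>\<nu>\<bar> + 1)\<^sup>2"
      using zero_le_power2[of "z * t / 2 - (\<bar>\<nu>\<bar> + 1)"]
      by (simp add: power2_eq_square algebra_simps)
    then show ?thesis
      using z by (simp add: pos_le_divide_eq mult.commute)
  qed
  finally show ?thesis .
qed

lemma borel_measurable_cosh [measurable]: "(cosh :: real \<Rightarrow> real) \<in> borel_measurable borel"
  by (intro borel_measurable_continuous_onI continuous_intros)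

lemma set_integrable_besselK_integrand:
  fixes z \<nu> :: real
  assumes "z > 0"
  shows "set_integrable lborel {0..} (\<lambda>t. exp (- z * cosh t) * cosh (\<nu> * t))"
proof (rule set_integrable_bound)
  show "set_integrable lborel {0..} (\<lambda>t. exp ((\<bar>\<nu>\<bar> + 1)\<^sup>2 / z) * exp (- 1 * \<bar>t\<bar>))"
    unfolding set_integrable_def
    using integrable_exp_neg_abs[of 1] by (intro integrable_mult_indicator) auto
  show "AE t in lborel. t \<in> {0..} \<longrightarrow>
          norm (exp (- z * cosh t) * cosh (\<nu> * t)) \<le> norm (exp ((\<bar>\<nu>\<bar> + 1)\<^sup>2 / z) * exp (- 1 * \<bar>t\<bar>))"
    using besselK_integrand_le[OF assms] by (intro AE_I2) auto
qed (simp add: set_borel_measurable_def)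

lemma besselK_measurable [measurable]: "besselK \<nu> \<in> borel_measurable borel"
  unfolding besselK_def set_lebesgue_integral_def by measurable

lemma besselK_ge:
  fixes \<nu> z :: real
  assumes z: "z > 0"
  shows "exp (- z * cosh 1) \<le> besselK \<nu> z"
proof -
  have unit_interval: "{0..} \<inter> {..1} = {0..1::real}"
    by auto
  have "exp (- z * cosh 1) = (LINT t:{0..}|lborel. indicator {..1::real} t * exp (- z * cosh 1))"
    by (simp add: set_lebesgue_integral_def indicator_inter_arith[symmetric] unit_interval)
  also have "\<dots> \<le> (LINT t:{0..}|lborel. exp (- z * cosh t) * cosh (\<nu> * t))"
  proof (rule set_integral_mono)
    show "set_integrable lborel {0..} (\<lambda>t. indicator {..1::real} t * exp (- z * cosh 1))"
      by (simp add: set_integrable_def mult.assoc[symmetric] indicator_inter_arith[symmetric] unit_interval)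
    show "set_integrable lborel {0..} (\<lambda>t. exp (- z * cosh t) * cosh (\<nu> * t))"
      by (rule set_integrable_besselK_integrand[OF z])
  next
    fix t :: real
    assume t: "t \<in> {0..}"
    show "indicator {..1} t * exp (- z * cosh 1) \<le> exp (- z * cosh t) * cosh (\<nu> * t)"
    proof (cases "t \<le> 1")
      case True
      then have "exp (- z * cosh 1) \<le> exp (- z * cosh t)"
        using t z by (simp add: cosh_real_nonneg_le_iff)
      also have "\<dots> \<le> exp (- z * cosh t) * cosh (\<nu> * t)"
        using cosh_real_ge_1[of "\<nu> * t"] by simp
      finally show ?thesis
        using True by simp
    qed (simp add: cosh_real_pos)
  qed
  finally show ?thesis
    by (simp add: besselK_def)
qed

lemma besselK_pos: "z > 0 \<Longrightarrow> 0 < besselK \<nu> z"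
  using exp_gt_zero besselK_ge by (rule less_le_trans)

lemma besselK_le:
  fixes \<nu> w z :: real
  assumes w: "w > 0" and wz: "w \<le> z"
  shows "besselK \<nu> z \<le> exp (w - z) * besselK \<nu> w"
proof -
  have "besselK \<nu> z \<le> (LINT t:{0..}|lborel. exp (w - z) * (exp (- w * cosh t) * cosh (\<nu> * t)))"
    unfolding besselK_def
  proof (rule set_integral_mono)
    show "set_integrable lborel {0..} (\<lambda>t. exp (- z * cosh t) * cosh (\<nu> * t))"
      using w wz by (intro set_integrable_besselK_integrand) simp
    show "set_integrable lborel {0..} (\<lambda>t. exp (w - z) * (exp (- w * cosh t) * cosh (\<nu> * t)))"
      using w by (intro set_integrable_mult_right set_integrable_besselK_integrand)
  next
    fix t :: real
    have "(z - w) * 1 \<le> (z - w) * cosh t"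
      using wz cosh_real_ge_1[of t] by (intro mult_left_mono) auto
    then have "exp (- z * cosh t) \<le> exp (w - z) * exp (- w * cosh t)"
      by (simp add: exp_add[symmetric] algebra_simps)
    then show "exp (- z * cosh t) * cosh (\<nu> * t) \<le> exp (w - z) * (exp (- w * cosh t) * cosh (\<nu> * t))"
      using cosh_real_pos[of "\<nu> * t"] by (simp add: mult.assoc[symmetric])
  qed
  also have "\<dots> = exp (w - z) * besselK \<nu> w"
    by (simp add: besselK_def)
  finally show ?thesis .
qed

lemma abs_mult_ln_le_of_exp_bounds:
  fixes y r a L M Q :: real
  assumes a: "a > 0" and Q: "Q \<ge> 0" and r: "r \<ge> 0" and L: "L > 0"
    and lower: "L * exp (- Q * r) \<le> y" and upper: "y \<le> M * exp (- a * r)"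
  shows "\<bar>y * ln y\<bar> \<le> M * (\<bar>ln M\<bar> + \<bar>ln L\<bar> + 2 * Q / a) * exp (- (a / 2) * r)"
proof -
  have y: "y > 0"
    using L lower by (meson exp_gt_zero mult_pos_pos less_le_trans)
  then have M: "M > 0"
    using upper by (meson exp_gt_zero zero_less_mult_pos2 less_le_trans)
  have "ln y \<le> ln (M * exp (- a * r))"
    using upper y by simp
  also have "\<dots> = ln M - a * r"
    using M by (simp add: ln_mult)
  finally have ln_upper: "ln y \<le> ln M - a * r" .
  have "ln L - Q * r = ln (L * exp (- Q * r))"
    using L by (simp add: ln_mult)
  also have "\<dots> \<le> ln y"
    using lower L y by (subst ln_le_cancel_iff) auto
  finally have ln_lower: "ln L - Q * r \<le> ln y" .
  have abs_ln: "\<bar>ln y\<bar> \<le> \<bar>ln M\<bar> + \<bar>ln L\<bar> + Q * r"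
    using ln_upper ln_lower mult_nonneg_nonneg[OF a[THEN less_imp_le] r] mult_nonneg_nonneg[OF Q r]
    by linarith
  have r_decay: "r * exp (- a * r) \<le> 2 / a * exp (- (a / 2) * r)"
  proof -
    have "a * r / 2 \<le> exp (a * r / 2)"
      using exp_ge_add_one_self[of "a * r / 2"] by linarith
    then have "r \<le> 2 / a * exp (a / 2 * r)"
      using a by (simp add: field_simps)
    then have "r * exp (- a * r) \<le> 2 / a * exp (a / 2 * r) * exp (- a * r)"
      by (rule mult_right_mono) simp
    then show ?thesis
      by (simp add: mult.assoc exp_add[symmetric])
  qed
  have "\<bar>y * ln y\<bar> = y * \<bar>ln y\<bar>"
    using y by (simp add: abs_mult)
  also have "\<dots> \<le> M * exp (- a * r) * (\<bar>ln M\<bar> + \<bar>ln L\<bar> + Q * r)"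
    using upper abs_ln y by (intro mult_mono) auto
  also have "\<dots> = M * ((\<bar>ln M\<bar> + \<bar>ln L\<bar>) * exp (- a * r) + Q * (r * exp (- a * r)))"
    by (simp add: algebra_simps)
  also have "\<dots> \<le> M * ((\<bar>ln M\<bar> + \<bar>ln L\<bar>) * exp (- (a / 2) * r) + Q * (2 / a * exp (- (a / 2) * r)))"
    using M Q a r r_decay by (intro mult_left_mono add_mono) auto
  also have "\<dots> = M * (\<bar>ln M\<bar> + \<bar>ln L\<bar> + 2 * Q / a) * exp (- (a / 2) * r)"
    by (simp add: algebra_simps)
  finally show ?thesis .
qed

lemma ndfhl_density_ge_exp:
  fixes lam u :: real
  assumes lam: "lam > 0" and u: "u > 0"
  obtains L Q where "L > 0" "Q \<ge> 0"
    "\<And>x::real^'n. L * exp (- Q * norm x) \<le> ndfhl_density d lam u x"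
proof
  define \<nu> where "\<nu> = real d / 2"
  define A where "A = lam / (2 powr (\<nu> - 1) * pi powr \<nu>)"
  define \<rho> where "\<rho> x = sqrt ((norm x)\<^sup>2 + lam\<^sup>2)" for x :: "real^'n"
  have \<nu>: "\<nu> \<ge> 0" and A: "A > 0"
    using lam by (simp_all add: \<nu>_def A_def)
  have density: "ndfhl_density d lam u x = A * (u / \<rho> x) powr \<nu> * exp (lam * u) * besselK \<nu> (u * \<rho> x)"
    for x :: "real^'n"
    by (simp add: ndfhl_density_def Let_def A_def \<nu>_def \<rho>_def)
  define Q where "Q = \<nu> + u * cosh 1"
  define L where "L = A * u powr \<nu> * exp (lam * u) * exp (- Q * lam)"
  show "L > 0"
    using A u by (simp add: L_def)
  show "Q \<ge> 0"
    using \<nu> u cosh_real_pos[of 1] by (simp add: Q_def)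
  fix x :: "real^'n"
  have r_ge: "lam \<le> \<rho> x" and r_le: "\<rho> x \<le> norm x + lam"
    using lam by (simp_all add: \<rho>_def sqrt_sum_squares_le_sum)
  then have r: "0 < \<rho> x"
    using lam by linarith
  have "\<rho> x \<le> exp (\<rho> x)"
    using exp_ge_add_one_self[of "\<rho> x"] by linarith
  then have "\<rho> x powr \<nu> \<le> exp (\<rho> x) powr \<nu>"
    using \<nu> r by (intro powr_mono2) auto
  also have "\<dots> = exp (\<nu> * \<rho> x)"
    by (simp add: exp_powr_real mult.commute)
  finally have pw: "u powr \<nu> * exp (- \<nu> * \<rho> x) \<le> (u / \<rho> x) powr \<nu>"
    using u r by (simp add: powr_divide exp_minus field_simps)
  have K: "exp (- (u * \<rho> x) * cosh 1) \<le> besselK \<nu> (u * \<rho> x)"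
    using u r by (intro besselK_ge) simp
  have "Q * \<rho> x \<le> Q * (norm x + lam)"
    using r_le \<open>Q \<ge> 0\<close> by (rule mult_left_mono)
  then have decay: "exp (- Q * lam) * exp (- Q * norm x) \<le> exp (- Q * \<rho> x)"
    by (simp add: algebra_simps flip: exp_add)
  have "L * exp (- Q * norm x) = A * u powr \<nu> * exp (lam * u) * (exp (- Q * lam) * exp (- Q * norm x))"
    by (simp add: L_def mult_ac)
  also have "\<dots> \<le> A * u powr \<nu> * exp (lam * u) * exp (- Q * \<rho> x)"
    using A decay by (intro mult_left_mono) auto
  also have "\<dots> = A * exp (lam * u) * ((u powr \<nu> * exp (- \<nu> * \<rho> x)) * exp (- (u * \<rho> x) * cosh 1))"
    by (simp add: Q_def algebra_simps flip: exp_add)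
  also have "\<dots> \<le> A * exp (lam * u) * ((u / \<rho> x) powr \<nu> * besselK \<nu> (u * \<rho> x))"
    using A pw K by (intro mult_left_mono mult_mono) auto
  finally show "L * exp (- Q * norm x) \<le> ndfhl_density d lam u x"
    by (simp add: density mult_ac)
qed

lemma ndfhl_density_le_exp:
  fixes lam u :: real
  assumes lam: "lam > 0" and u: "u > 0"
  obtains M where "\<And>x::real^'n. ndfhl_density d lam u x \<le> M * exp (- u * norm x)"
proof
  define \<nu> where "\<nu> = real d / 2"
  define A where "A = lam / (2 powr (\<nu> - 1) * pi powr \<nu>)"
  define \<rho> where "\<rho> x = sqrt ((norm x)\<^sup>2 + lam\<^sup>2)" for x :: "real^'n"
  have \<nu>: "\<nu> \<ge> 0" and A: "A > 0"
    using lam by (simp_all add: \<nu>_def A_def)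
  have density: "ndfhl_density d lam u x = A * (u / \<rho> x) powr \<nu> * exp (lam * u) * besselK \<nu> (u * \<rho> x)"
    for x :: "real^'n"
    by (simp add: ndfhl_density_def Let_def A_def \<nu>_def \<rho>_def)
  define M where "M = A * (u / lam) powr \<nu> * exp (2 * lam * u) * besselK \<nu> (u * lam)"
  fix x :: "real^'n"
  have r_ge: "lam \<le> \<rho> x" "norm x \<le> \<rho> x"
    by (simp_all add: \<rho>_def)
  have pw: "(u / \<rho> x) powr \<nu> \<le> (u / lam) powr \<nu>"
    using \<nu> u lam r_ge by (intro powr_mono2 divide_left_mono) auto
  have K: "besselK \<nu> (u * \<rho> x) \<le> exp (u * lam - u * \<rho> x) * besselK \<nu> (u * lam)"
    using u lam r_ge by (intro besselK_le) auto
  have "ndfhl_density d lam u x \<le> A * (u / lam) powr \<nu> * exp (lam * u)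
                                    * (exp (u * lam - u * \<rho> x) * besselK \<nu> (u * lam))"
    unfolding density using A pw K u lam r_ge besselK_pos[of "u * \<rho> x" \<nu>]
    by (intro mult_mono mult_nonneg_nonneg) auto
  also have "\<dots> = M * exp (- u * \<rho> x)"
    by (simp add: M_def algebra_simps flip: exp_add)
  also have "\<dots> \<le> M * exp (- u * norm x)"
    using r_ge u A lam besselK_pos[of "u * lam" \<nu>] by (intro mult_left_mono) (auto simp: M_def)
  finally show "ndfhl_density d lam u x \<le> M * exp (- u * norm x)" .
qed

theorem lemma9:
  fixes lam u :: real
  assumes "lam > 0" and "u > 0"
  shows "diff_entropy_finite
           (ndfhl_density (CARD('n) + 1) lam u :: real ^ 'n \<Rightarrow> real)"
proof -
  let ?f = "ndfhl_density (CARD('n) + 1) lam u :: real ^ 'n \<Rightarrow> real"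
  obtain L Q where "L > 0" "Q \<ge> 0"
    and lower: "\<And>x. L * exp (- Q * norm x) \<le> ?f x"
    using ndfhl_density_ge_exp[OF assms] by metis
  obtain M where upper: "\<And>x. ?f x \<le> M * exp (- u * norm x)"
    using ndfhl_density_le_exp[OF assms] by metis
  define C where "C = M * (\<bar>ln M\<bar> + \<bar>ln L\<bar> + 2 * Q / u)"
  have bound: "\<bar>?f x * ln (?f x)\<bar> \<le> C * exp (- (u / 2) * norm x)" for x
    unfolding C_def
    using abs_mult_ln_le_of_exp_bounds[OF \<open>u > 0\<close> \<open>Q \<ge> 0\<close> norm_ge_zero \<open>L > 0\<close> lower upper] .
  have "integrable lborel (\<lambda>x. ?f x * ln (?f x))"
  proof (rule Bochner_Integration.integrable_bound)
    show "integrable lborel (\<lambda>x::real^'n. C * exp (- (u / 2) * norm x))"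
      using \<open>u > 0\<close> by (intro integrable_mult_right integrable_exp_neg_norm) simp
    show "AE x in lborel. norm (?f x * ln (?f x)) \<le> norm (C * exp (- (u / 2) * norm x))"
      using bound by (intro AE_I2) (metis abs_ge_self order.trans real_norm_def)
    show "(\<lambda>x. ?f x * ln (?f x)) \<in> borel_measurable lborel"
      unfolding ndfhl_density_def Let_def by measurable
  qed
  then show ?thesis
    unfolding diff_entropy_finite_def .
qed

end
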